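(* Consider the two-layer multi-item order fulfillment problem described in the context with a single FDC ($K=1$), any fixed costs $f_0,f_1\ge0$, and variable costs in $[a,b]$ for constants $b>a>0$. Then every online fulfillment policy $\mathrm{ALG}$ (deterministic or randomized) satisfies \[\mathfrak R(\mathrm{ALG})\ge\max\left\{1,\ \frac13\sqrt{\frac ba},\ \frac14\max_{n\ge2}\min\left\{n,\ \frac{f_0}{f_1+na}\right\}\right\},\] where the inner maximum is over integers $n\ge 2$.
   Context: Problem with one FDC (index $1$) and one RDC (index $0$, unlimited inventory). The FDC initially holds $I_{1,0}^i\ge0$ units of item $i$, never replenished. In periods $t=1,\dots,T$ an order $\boldsymbol S_t=(S_t^i)_i$ of nonnegative integers arrives; after observing it and the variable costs $c_{k,t}^i$, the policy must immediately and irrevocably choose $m_{0,t}^i,m_{1,t}^i\ge0$ with $m_{0,t}^i+m_{1,t}^i=S_t^i$ and $m_{1,t}^i\le I_{1,t-1}^i$, $I_{1,t}^i=I_{1,0}^i-\sum_{\tau\le t}m_{1,\tau}^i$. Period cost $\sum_{k=0,1}[f_k\mathbb{I}(\sum_im_{k,t}^i>0)+\sum_ic_{k,t}^im_{k,t}^i]$; total cost is the sum. An online policy (possibly randomized) decides in period $t$ using only fixed costs, initial inventories and orders/variable costs up to $t$. $\mathfrak R(\mathrm{ALG})$ is the supremum of $\mathrm{ALG}(I)/\mathrm{OPT}(I)$ ((expected) policy cost over offline optimal cost) over all numbers of items, horizons $T$, initial inventories, variable costs in $[a,b]$ and order sequences. *)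

theory Defs
  imports "HOL-Probability.Probability"
begin

text \<open>
  Single FDC (index 1) and RDC (index 0). Items are 0..<N, periods are 1..T.
  I0 i : initial FDC inventory of item i.
  S t i : order quantity of item i in period t.
  c k t i : variable cost of shipping one unit of item i from warehouse k in period t.
  m1 t i : quantity shipped from the FDC; the RDC ships m0 t i = S t i - m1 t i.
\<close>

type_synonym policy =
  "nat \<Rightarrow> (nat \<Rightarrow> nat) \<Rightarrow> nat \<Rightarrow> (nat \<Rightarrow> nat \<Rightarrow> nat)
     \<Rightarrow> (nat \<Rightarrow> nat \<Rightarrow> nat \<Rightarrow> real) \<Rightarrow> nat \<Rightarrow> nat"
  \<comment> \<open>arguments: N, I0, current period t, orders S, costs c, item i; result m1 t i\<close>

definition valid_costs :: "real \<Rightarrow> real \<Rightarrow> nat \<Rightarrow> nat \<Rightarrow> (nat \<Rightarrow> nat \<Rightarrow> nat \<Rightarrow> real) \<Rightarrow> bool" where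
  "valid_costs a b N T c \<longleftrightarrow>
     (\<forall>k\<in>{0,1}. \<forall>t\<in>{1..T}. \<forall>i<N. a \<le> c k t i \<and> c k t i \<le> b)"

definition feasible :: "nat \<Rightarrow> nat \<Rightarrow> (nat \<Rightarrow> nat) \<Rightarrow> (nat \<Rightarrow> nat \<Rightarrow> nat) \<Rightarrow> (nat \<Rightarrow> nat \<Rightarrow> nat) \<Rightarrow> bool" where
  "feasible N T I0 S m1 \<longleftrightarrow>
     (\<forall>t\<in>{1..T}. \<forall>i<N. m1 t i \<le> S t i \<and> (\<Sum>\<tau>\<in>{1..t}. m1 \<tau> i) \<le> I0 i)"

definition total_cost :: "real \<Rightarrow> real \<Rightarrow> nat \<Rightarrow> nat \<Rightarrow> (nat \<Rightarrow> nat \<Rightarrow> nat)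
     \<Rightarrow> (nat \<Rightarrow> nat \<Rightarrow> nat \<Rightarrow> real) \<Rightarrow> (nat \<Rightarrow> nat \<Rightarrow> nat) \<Rightarrow> real" where
  "total_cost f0 f1 N T S c m1 =
     (\<Sum>t\<in>{1..T}.
        f0 * (if (\<Sum>i<N. S t i - m1 t i) > 0 then 1 else 0)
      + f1 * (if (\<Sum>i<N. m1 t i) > 0 then 1 else 0)
      + (\<Sum>i<N. c 0 t i * real (S t i - m1 t i) + c 1 t i * real (m1 t i)))"

definition OPT :: "real \<Rightarrow> real \<Rightarrow> nat \<Rightarrow> nat \<Rightarrow> (nat \<Rightarrow> nat) \<Rightarrow> (nat \<Rightarrow> nat \<Rightarrow> nat)
     \<Rightarrow> (nat \<Rightarrow> nat \<Rightarrow> nat \<Rightarrow> real) \<Rightarrow> real" where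
  "OPT f0 f1 N T I0 S c = Inf {total_cost f0 f1 N T S c m1 | m1. feasible N T I0 S m1}"

definition decisions :: "policy \<Rightarrow> nat \<Rightarrow> (nat \<Rightarrow> nat) \<Rightarrow> (nat \<Rightarrow> nat \<Rightarrow> nat)
     \<Rightarrow> (nat \<Rightarrow> nat \<Rightarrow> nat \<Rightarrow> real) \<Rightarrow> (nat \<Rightarrow> nat \<Rightarrow> nat)" where
  "decisions pol N I0 S c = (\<lambda>t i. pol N I0 t S c i)"

text \<open>A deterministic online policy: the decision in period t depends only on the
  items, initial inventories and the orders/variable costs of periods 1..t
  (not on the horizon T nor on future data), and it is always feasible.\<close>
definition online_policy :: "real \<Rightarrow> real \<Rightarrow> policy \<Rightarrow> bool" where
  "online_policy a b pol \<longleftrightarrow>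
     (\<forall>N I0 I0' t S S' c c' i.
        (\<forall>j<N. I0 j = I0' j) \<and>
        (\<forall>\<tau>\<in>{1..t}. \<forall>j<N. S \<tau> j = S' \<tau> j \<and> c 0 \<tau> j = c' 0 \<tau> j \<and> c 1 \<tau> j = c' 1 \<tau> j)
        \<longrightarrow> pol N I0 t S c i = pol N I0' t S' c' i)
   \<and> (\<forall>N T I0 S c. valid_costs a b N T c \<longrightarrow> feasible N T I0 S (decisions pol N I0 S c))"

text \<open>A randomized online policy: a random choice (on a probability space M) of a
  deterministic online policy, with measurable cost on every instance.
  Deterministic policies are the case of constant P.\<close>
definition randomized_policy :: "real \<Rightarrow> real \<Rightarrow> real \<Rightarrow> real \<Rightarrow> 'w measure \<Rightarrow> ('w \<Rightarrow> policy) \<Rightarrow> bool" where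
  "randomized_policy a b f0 f1 M P \<longleftrightarrow>
     prob_space M
   \<and> (\<forall>\<omega>\<in>space M. online_policy a b (P \<omega>))
   \<and> (\<forall>N T I0 S c. valid_costs a b N T c \<longrightarrow>
        (\<lambda>\<omega>. total_cost f0 f1 N T S c (decisions (P \<omega>) N I0 S c)) \<in> borel_measurable M)"

definition expected_cost :: "real \<Rightarrow> real \<Rightarrow> 'w measure \<Rightarrow> ('w \<Rightarrow> policy) \<Rightarrow> nat \<Rightarrow> nat
     \<Rightarrow> (nat \<Rightarrow> nat) \<Rightarrow> (nat \<Rightarrow> nat \<Rightarrow> nat) \<Rightarrow> (nat \<Rightarrow> nat \<Rightarrow> nat \<Rightarrow> real) \<Rightarrow> real" where
  "expected_cost f0 f1 M P N T I0 S c =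
     (LINT \<omega>|M. total_cost f0 f1 N T S c (decisions (P \<omega>) N I0 S c))"

definition competitive_ratio :: "real \<Rightarrow> real \<Rightarrow> real \<Rightarrow> real \<Rightarrow> 'w measure \<Rightarrow> ('w \<Rightarrow> policy) \<Rightarrow> ereal" where
  "competitive_ratio a b f0 f1 M P =
     (SUP x \<in> {(N, T, I0, S, c). valid_costs a b N T c}.
        (case x of (N, T, I0, S, c) \<Rightarrow>
           ereal (expected_cost f0 f1 M P N T I0 S c / OPT f0 f1 N T I0 S c)))"

end

theory Submission
  imports Defs
begin

text \<open>
  A policy never learns the horizon \<open>T\<close>: its decisions are a function of the data alone, so on
  two instances that differ only in \<open>T\<close> every deterministic policy makes the same decisions.
  If for each such policy the two cost ratios add up to at least \<open>2 r\<close>, then so do the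
  expected ones, and one of the two instances forces ratio \<open>r\<close>.

  For \<open>sqrt (b / a) / 3\<close>: one item, \<open>L\<close> units ordered and stocked at the FDC. The FDC
  costs \<open>a\<close>; the RDC costs \<open>s = sqrt (a b)\<close> in period 1 and \<open>b\<close> afterwards, when the
  order may be repeated. Serving period 1 from the RDC overpays by \<open>s / a\<close> if the horizon
  ends there; serving it from the FDC leaves the repeated order to the RDC at price \<open>b\<close>,
  against an optimum of \<open>s + a\<close> per unit. With \<open>L\<close> large the fixed costs are negligible.

  For the fixed-cost bound: \<open>n\<close> items with one unit each at the FDC, ordered together in
  period 1 and then one at a time. Using the RDC in period 1 costs \<open>f0\<close> against an optimum
  of \<open>f1 + n a\<close> if the horizon ends; using only the FDC empties it, so each of the \<open>n\<close> later
  single orders costs \<open>f0\<close>, against \<open>f0 + n f1 + 2 n a\<close> for the optimum.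
\<close>

section \<open>Cost bounds\<close>

definition shipping_cost :: "nat \<Rightarrow> (nat \<Rightarrow> nat \<Rightarrow> nat) \<Rightarrow> (nat \<Rightarrow> nat \<Rightarrow> nat \<Rightarrow> real)
     \<Rightarrow> (nat \<Rightarrow> nat \<Rightarrow> nat) \<Rightarrow> nat \<Rightarrow> real" where
  "shipping_cost N S c m1 t = (\<Sum>i<N. c 0 t i * real (S t i - m1 t i) + c 1 t i * real (m1 t i))"

definition period_cost :: "real \<Rightarrow> real \<Rightarrow> nat \<Rightarrow> (nat \<Rightarrow> nat \<Rightarrow> nat)
     \<Rightarrow> (nat \<Rightarrow> nat \<Rightarrow> nat \<Rightarrow> real) \<Rightarrow> (nat \<Rightarrow> nat \<Rightarrow> nat) \<Rightarrow> nat \<Rightarrow> real" where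
  "period_cost f0 f1 N S c m1 t =
        f0 * (if (\<Sum>i<N. S t i - m1 t i) > 0 then 1 else 0)
      + f1 * (if (\<Sum>i<N. m1 t i) > 0 then 1 else 0)
      + shipping_cost N S c m1 t"

lemma total_cost_eq_sum_period_cost:
  "total_cost f0 f1 N T S c m1 = (\<Sum>t\<in>{1..T}. period_cost f0 f1 N S c m1 t)"
  by (simp add: total_cost_def period_cost_def shipping_cost_def)

lemma split_shipment_cost_ge:
  fixes a c0 c1 :: real
  assumes "a \<le> c0" "a \<le> c1" "m \<le> s"
  shows "a * real s \<le> c0 * real (s - m) + c1 * real m"
proof -
  have "a * real s = a * real (s - m) + a * real m"
    using assms(3) by (simp add: of_nat_diff algebra_simps)
  also have "\<dots> \<le> c0 * real (s - m) + c1 * real m"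
    using assms(1,2) by (intro add_mono mult_right_mono) auto
  finally show ?thesis .
qed

lemma split_shipment_cost_le:
  fixes b c0 c1 :: real
  assumes "c0 \<le> b" "c1 \<le> b" "m \<le> s"
  shows "c0 * real (s - m) + c1 * real m \<le> b * real s"
proof -
  have "c0 * real (s - m) + c1 * real m \<le> b * real (s - m) + b * real m"
    using assms(1,2) by (intro add_mono mult_right_mono) auto
  also have "\<dots> = b * real s"
    using assms(3) by (simp add: of_nat_diff algebra_simps)
  finally show ?thesis .
qed

lemma feasibleD:
  assumes "feasible N T I0 S m1" "t \<in> {1..T}" "i < N"
  shows "m1 t i \<le> S t i" "(\<Sum>\<tau>\<in>{1..t}. m1 \<tau> i) \<le> I0 i"
  using assms unfolding feasible_def by auto

lemma feasible_prefix: "feasible N T I0 S m1 \<Longrightarrow> T' \<le> T \<Longrightarrow> feasible N T' I0 S m1"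
  unfolding feasible_def by auto

lemma valid_costsD:
  assumes "valid_costs a b N T c" "t \<in> {1..T}" "i < N"
  shows "a \<le> c 0 t i" "c 0 t i \<le> b" "a \<le> c 1 t i" "c 1 t i \<le> b"
  using assms unfolding valid_costs_def by auto

lemma shipping_cost_ge_demand:
  assumes "valid_costs a b N T c" "feasible N T I0 S m1" "t \<in> {1..T}"
  shows "a * (\<Sum>i<N. real (S t i)) \<le> shipping_cost N S c m1 t"
  unfolding shipping_cost_def sum_distrib_left
  using assms by (intro sum_mono split_shipment_cost_ge) (auto dest: valid_costsD feasibleD)

lemma shipping_cost_le_demand:
  assumes "valid_costs a b N T c" "feasible N T I0 S m1" "t \<in> {1..T}"
  shows "shipping_cost N S c m1 t \<le> b * (\<Sum>i<N. real (S t i))"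
  unfolding shipping_cost_def sum_distrib_left
  using assms by (intro sum_mono split_shipment_cost_le) (auto dest: valid_costsD feasibleD)

lemma period_cost_ge_shipping_cost:
  assumes "0 \<le> f0" "0 \<le> f1"
  shows "shipping_cost N S c m1 t \<le> period_cost f0 f1 N S c m1 t"
  using assms by (simp add: period_cost_def)

lemma period_cost_ge_rdc_fixed_cost:
  assumes "0 \<le> f1" "valid_costs a b N T c" "feasible N T I0 S m1" "t \<in> {1..T}"
    and "i < N" "m1 t i < S t i"
  shows "f0 + a * (\<Sum>j<N. real (S t j)) \<le> period_cost f0 f1 N S c m1 t"
proof -
  have "0 < S t i - m1 t i" using assms(6) by simp
  also have "\<dots> \<le> (\<Sum>j<N. S t j - m1 t j)" using assms(5) by (intro member_le_sum) auto
  finally show ?thesis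
    using assms(1) shipping_cost_ge_demand[OF assms(2-4)] by (simp add: period_cost_def)
qed

lemma period_cost_le:
  assumes "0 \<le> f0" "0 \<le> f1" "valid_costs a b N T c" "feasible N T I0 S m1" "t \<in> {1..T}"
  shows "period_cost f0 f1 N S c m1 t \<le> f0 + f1 + b * (\<Sum>i<N. real (S t i))"
proof -
  have "f0 * (if (\<Sum>i<N. S t i - m1 t i) > 0 then 1 else 0) \<le> f0"
    "f1 * (if (\<Sum>i<N. m1 t i) > 0 then 1 else 0) \<le> f1"
    using assms(1,2) by auto
  then show ?thesis
    using shipping_cost_le_demand[OF assms(3-5)] unfolding period_cost_def by linarith
qed

lemma total_cost_ge_shipping_cost:
  assumes "0 \<le> f0" "0 \<le> f1"
  shows "(\<Sum>t\<in>{1..T}. shipping_cost N S c m1 t) \<le> total_cost f0 f1 N T S c m1"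
  unfolding total_cost_eq_sum_period_cost
  using assms by (intro sum_mono period_cost_ge_shipping_cost)

lemma total_cost_ge_demand:
  assumes "0 \<le> f0" "0 \<le> f1" "valid_costs a b N T c" "feasible N T I0 S m1"
  shows "(\<Sum>t\<in>{1..T}. a * (\<Sum>i<N. real (S t i))) \<le> total_cost f0 f1 N T S c m1"
proof -
  have "(\<Sum>t\<in>{1..T}. a * (\<Sum>i<N. real (S t i))) \<le> (\<Sum>t\<in>{1..T}. shipping_cost N S c m1 t)"
    by (intro sum_mono shipping_cost_ge_demand[OF assms(3,4)])
  also have "\<dots> \<le> total_cost f0 f1 N T S c m1"
    by (rule total_cost_ge_shipping_cost[OF assms(1,2)])
  finally show ?thesis .
qed

lemma total_cost_nonneg:
  assumes "0 \<le> f0" "0 \<le> f1" "0 \<le> a" "valid_costs a b N T c" "feasible N T I0 S m1"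
  shows "0 \<le> total_cost f0 f1 N T S c m1"
  using assms(3) total_cost_ge_demand[OF assms(1,2,4,5)]
  by (meson order_trans sum_nonneg mult_nonneg_nonneg of_nat_0_le_iff)

lemma total_cost_le:
  assumes "0 \<le> f0" "0 \<le> f1" "valid_costs a b N T c" "feasible N T I0 S m1"
  shows "total_cost f0 f1 N T S c m1 \<le> (\<Sum>t\<in>{1..T}. f0 + f1 + b * (\<Sum>i<N. real (S t i)))"
  unfolding total_cost_eq_sum_period_cost using assms by (intro sum_mono period_cost_le)

lemma feasible_no_fdc: "feasible N T I0 S (\<lambda>t i. 0)"
  unfolding feasible_def by auto

lemma OPT_le_total_cost:
  assumes "0 \<le> f0" "0 \<le> f1" "0 \<le> a" "valid_costs a b N T c" "feasible N T I0 S m1"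
  shows "OPT f0 f1 N T I0 S c \<le> total_cost f0 f1 N T S c m1"
  unfolding OPT_def
proof (rule cInf_lower)
  show "bdd_below {total_cost f0 f1 N T S c m1 |m1. feasible N T I0 S m1}"
    by (rule bdd_belowI[of _ 0]) (use total_cost_nonneg[OF assms(1-4)] in blast)
qed (use assms(5) in blast)

lemma OPT_ge_demand:
  assumes "0 \<le> f0" "0 \<le> f1" "valid_costs a b N T c"
  shows "(\<Sum>t\<in>{1..T}. a * (\<Sum>i<N. real (S t i))) \<le> OPT f0 f1 N T I0 S c"
  unfolding OPT_def
  by (rule cInf_greatest) (use feasible_no_fdc total_cost_ge_demand[OF assms] in blast)+

lemma valid_constant_costs: "a \<le> b \<Longrightarrow> valid_costs a b N T (\<lambda>_ _ _. a)"
  unfolding valid_costs_def by simp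

section \<open>Averaging over two instances\<close>

lemma feasible_decisions:
  assumes "randomized_policy a b f0 f1 M P" "\<omega> \<in> space M" "valid_costs a b N T c"
  shows "feasible N T I0 S (decisions (P \<omega>) N I0 S c)"
  using assms unfolding randomized_policy_def online_policy_def by blast

lemma integrable_policy_cost:
  assumes rp: "randomized_policy a b f0 f1 M P" and v: "valid_costs a b N T c"
    and "0 \<le> f0" "0 \<le> f1" "0 \<le> a"
  shows "integrable M (\<lambda>\<omega>. total_cost f0 f1 N T S c (decisions (P \<omega>) N I0 S c))"
proof -
  interpret prob_space M using rp unfolding randomized_policy_def by blast
  show ?thesis
  proof (rule integrable_const_bound[where B="\<Sum>t\<in>{1..T}. f0 + f1 + b * (\<Sum>i<N. real (S t i))"])
    show "AE \<omega> in M. norm (total_cost f0 f1 N T S c (decisions (P \<omega>) N I0 S c))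
        \<le> (\<Sum>t\<in>{1..T}. f0 + f1 + b * (\<Sum>i<N. real (S t i)))"
    proof (rule AE_I2)
      fix \<omega> assume "\<omega> \<in> space M"
      then have "feasible N T I0 S (decisions (P \<omega>) N I0 S c)"
        by (rule feasible_decisions[OF rp _ v])
      then show "norm (total_cost f0 f1 N T S c (decisions (P \<omega>) N I0 S c))
          \<le> (\<Sum>t\<in>{1..T}. f0 + f1 + b * (\<Sum>i<N. real (S t i)))"
        using total_cost_nonneg[OF assms(3-5) v] total_cost_le[OF assms(3,4) v] by simp
    qed
    show "(\<lambda>\<omega>. total_cost f0 f1 N T S c (decisions (P \<omega>) N I0 S c)) \<in> borel_measurable M"
      using rp v unfolding randomized_policy_def by blast
  qed
qed

lemma competitive_ratio_ge_instance:
  assumes "valid_costs a b N T c"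
  shows "ereal (expected_cost f0 f1 M P N T I0 S c / OPT f0 f1 N T I0 S c)
           \<le> competitive_ratio a b f0 f1 M P"
  unfolding competitive_ratio_def
  by (rule SUP_upper2[of "(N, T, I0, S, c)"]) (use assms in auto)

lemma competitive_ratio_ge_pair_average:
  assumes rp: "randomized_policy a b f0 f1 M P" and f: "0 \<le> f0" "0 \<le> f1" "0 \<le> a"
    and vA: "valid_costs a b NA TA cA" and vB: "valid_costs a b NB TB cB"
    and OA: "0 < OPT f0 f1 NA TA IA SA cA" and OB: "0 < OPT f0 f1 NB TB IB SB cB"
    and ratio_sum: "\<And>\<omega>. \<omega> \<in> space M \<Longrightarrow> 2 * r \<le>
        total_cost f0 f1 NA TA SA cA (decisions (P \<omega>) NA IA SA cA) / OPT f0 f1 NA TA IA SA cA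
      + total_cost f0 f1 NB TB SB cB (decisions (P \<omega>) NB IB SB cB) / OPT f0 f1 NB TB IB SB cB"
  shows "ereal r \<le> competitive_ratio a b f0 f1 M P"
proof -
  interpret prob_space M using rp unfolding randomized_policy_def by blast
  define X where "X = (\<lambda>\<omega>. total_cost f0 f1 NA TA SA cA (decisions (P \<omega>) NA IA SA cA))"
  define Y where "Y = (\<lambda>\<omega>. total_cost f0 f1 NB TB SB cB (decisions (P \<omega>) NB IB SB cB))"
  define RA where "RA = expected_cost f0 f1 M P NA TA IA SA cA / OPT f0 f1 NA TA IA SA cA"
  define RB where "RB = expected_cost f0 f1 M P NB TB IB SB cB / OPT f0 f1 NB TB IB SB cB"
  have iX: "integrable M X" unfolding X_def by (rule integrable_policy_cost[OF rp vA f])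
  have iY: "integrable M Y" unfolding Y_def by (rule integrable_policy_cost[OF rp vB f])
  have "2 * r = (LINT \<omega>|M. 2 * r)" by (simp add: prob_space)
  also have "\<dots> \<le> (LINT \<omega>|M. X \<omega> / OPT f0 f1 NA TA IA SA cA + Y \<omega> / OPT f0 f1 NB TB IB SB cB)"
    using iX iY ratio_sum by (intro integral_mono) (auto simp: X_def Y_def)
  also have "\<dots> = RA + RB"
    using iX iY by (simp add: RA_def RB_def expected_cost_def X_def Y_def)
  finally have "r \<le> RA \<or> r \<le> RB" by linarith
  then show ?thesis
    using competitive_ratio_ge_instance[OF vA] competitive_ratio_ge_instance[OF vB]
    unfolding RA_def RB_def by (meson ereal_less_eq(3) order_trans)
qed

lemma competitive_ratio_ge_one:
  assumes rp: "randomized_policy a b f0 f1 M P" and "0 < a" "a \<le> b" "0 \<le> f0" "0 \<le> f1"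
  shows "1 \<le> competitive_ratio a b f0 f1 M P"
proof -
  let ?OPT = "OPT f0 f1 1 1 (\<lambda>_. 0) (\<lambda>_ _. 1) (\<lambda>_ _ _. a)"
  let ?cost = "\<lambda>\<omega>. total_cost f0 f1 1 1 (\<lambda>_ _. 1) (\<lambda>_ _ _. a)
    (decisions (P \<omega>) 1 (\<lambda>_. 0) (\<lambda>_ _. 1) (\<lambda>_ _ _. a))"
  have v: "valid_costs a b 1 1 (\<lambda>_ _ _. a)" by (rule valid_constant_costs[OF assms(3)])
  have "a \<le> ?OPT" using OPT_ge_demand[OF assms(4,5) v, of "\<lambda>_ _. 1" "\<lambda>_. 0"] by simp
  then have OPT_pos: "0 < ?OPT" using assms(2) by linarith
  have "ereal 1 \<le> competitive_ratio a b f0 f1 M P"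
  proof (rule competitive_ratio_ge_pair_average[OF rp assms(4,5) _ v v OPT_pos OPT_pos])
    fix \<omega> assume "\<omega> \<in> space M"
    from OPT_le_total_cost[OF assms(4,5) _ v feasible_decisions[OF rp this v]] assms(2)
    have "?OPT \<le> ?cost \<omega>" by simp
    then have "1 \<le> ?cost \<omega> / ?OPT" using OPT_pos by simp
    then show "2 * 1 \<le> ?cost \<omega> / ?OPT + ?cost \<omega> / ?OPT" by simp
  qed (use assms(2) in simp)
  then show ?thesis by (simp add: one_ereal_def)
qed

section \<open>The bound \<open>sqrt (b / a) / 3\<close>\<close>

definition step_costs :: "real \<Rightarrow> real \<Rightarrow> real \<Rightarrow> nat \<Rightarrow> nat \<Rightarrow> nat \<Rightarrow> real" where
  "step_costs a s b k t i = (if k = 1 then a else if t = 1 then s else b)"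

lemma valid_step_costs: "a \<le> s \<Longrightarrow> s \<le> b \<Longrightarrow> valid_costs a b N T (step_costs a s b)"
  unfolding valid_costs_def step_costs_def by auto

lemma OPT_step_one_period:
  assumes "0 < a" "a \<le> s" "s \<le> b" "0 \<le> f0" "0 \<le> f1" "0 < L"
  shows "a * real L \<le> OPT f0 f1 1 1 (\<lambda>_. L) (\<lambda>_ _. L) (step_costs a s b)"
    and "OPT f0 f1 1 1 (\<lambda>_. L) (\<lambda>_ _. L) (step_costs a s b) \<le> f1 + a * real L"
proof -
  have v: "valid_costs a b 1 1 (step_costs a s b)" using assms by (intro valid_step_costs)
  show "a * real L \<le> OPT f0 f1 1 1 (\<lambda>_. L) (\<lambda>_ _. L) (step_costs a s b)"
    using OPT_ge_demand[OF assms(4,5) v] by simp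
  have "feasible 1 1 (\<lambda>_. L) (\<lambda>_ _. L) (\<lambda>_ _. L)" unfolding feasible_def by auto
  from OPT_le_total_cost[OF assms(4,5) _ v this] assms(1,6)
  show "OPT f0 f1 1 1 (\<lambda>_. L) (\<lambda>_ _. L) (step_costs a s b) \<le> f1 + a * real L"
    by (simp add: total_cost_def step_costs_def)
qed

lemma OPT_step_two_periods:
  assumes "0 < a" "a \<le> s" "s \<le> b" "0 \<le> f0" "0 \<le> f1" "0 < L"
  shows "a * real L \<le> OPT f0 f1 1 2 (\<lambda>_. L) (\<lambda>_ _. L) (step_costs a s b)"
    and "OPT f0 f1 1 2 (\<lambda>_. L) (\<lambda>_ _. L) (step_costs a s b) \<le> f0 + f1 + (s + a) * real L"
proof -
  have v: "valid_costs a b 1 2 (step_costs a s b)" using assms by (intro valid_step_costs)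
  have "2 * (a * real L) \<le> OPT f0 f1 1 2 (\<lambda>_. L) (\<lambda>_ _. L) (step_costs a s b)"
    using OPT_ge_demand[OF assms(4,5) v, of "\<lambda>_ _. L" "\<lambda>_. L"]
    by (simp add: numeral_2_eq_2)
  moreover have "0 \<le> a * real L" using assms(1) by simp
  ultimately show "a * real L \<le> OPT f0 f1 1 2 (\<lambda>_. L) (\<lambda>_ _. L) (step_costs a s b)"
    by linarith
  define m1 :: "nat \<Rightarrow> nat \<Rightarrow> nat" where "m1 = (\<lambda>t _. if t = 2 then L else 0)"
  have "feasible 1 2 (\<lambda>_. L) (\<lambda>_ _. L) m1"
    unfolding feasible_def m1_def by (auto simp: numeral_2_eq_2 le_Suc_eq)
  from OPT_le_total_cost[OF assms(4,5) _ v this] assms(1,6)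
  show "OPT f0 f1 1 2 (\<lambda>_. L) (\<lambda>_ _. L) (step_costs a s b) \<le> f0 + f1 + (s + a) * real L"
    by (simp add: total_cost_def step_costs_def m1_def numeral_2_eq_2 algebra_simps)
qed

lemma total_cost_step_ge:
  fixes m1 :: "nat \<Rightarrow> nat \<Rightarrow> nat"
  defines "x \<equiv> real (m1 1 0)"
  assumes "0 \<le> f0" "0 \<le> f1" "a \<le> b" "feasible 1 2 (\<lambda>_. L) (\<lambda>_ _. L) m1"
  shows "s * (real L - x) + a * x \<le> total_cost f0 f1 1 1 (\<lambda>_ _. L) (step_costs a s b) m1"
    and "s * (real L - x) + a * x + a * (real L - x) + b * x
           \<le> total_cost f0 f1 1 2 (\<lambda>_ _. L) (step_costs a s b) m1"
proof -
  have "m1 1 0 + m1 2 0 \<le> L"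
    using feasibleD(2)[OF assms(5), of 2 0] by (simp add: numeral_2_eq_2)
  then have m1_le: "m1 1 0 \<le> L" "m1 2 0 \<le> L" "real (m1 2 0) \<le> real L - x"
    unfolding x_def by linarith+
  have first: "shipping_cost 1 (\<lambda>_ _. L) (step_costs a s b) m1 1 = s * (real L - x) + a * x"
    using m1_le by (simp add: shipping_cost_def step_costs_def x_def of_nat_diff)
  then show "s * (real L - x) + a * x \<le> total_cost f0 f1 1 1 (\<lambda>_ _. L) (step_costs a s b) m1"
    using total_cost_ge_shipping_cost[OF assms(2,3), of 1 "\<lambda>_ _. L" "step_costs a s b" m1 1]
    by simp
  have "a * (real L - x) + b * x \<le> b * (real L - real (m1 2 0)) + a * real (m1 2 0)"
    using mult_left_mono[OF m1_le(3), of "b - a"] assms(4) by (simp add: algebra_simps)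
  also have "\<dots> = shipping_cost 1 (\<lambda>_ _. L) (step_costs a s b) m1 2"
    using m1_le by (simp add: shipping_cost_def step_costs_def of_nat_diff)
  finally show "s * (real L - x) + a * x + a * (real L - x) + b * x
           \<le> total_cost f0 f1 1 2 (\<lambda>_ _. L) (step_costs a s b) m1"
    using first total_cost_ge_shipping_cost[OF assms(2,3), of 1 "\<lambda>_ _. L" "step_costs a s b" m1 2]
    by (simp add: numeral_2_eq_2)
qed

lemma step_ratio_balance:
  fixes a s b x l :: real
  assumes "0 < a" "a \<le> s" "s * s = a * b" "0 \<le> x" "x \<le> l" "0 < l"
  shows "s / a \<le> (s * (l - x) + a * x) / (a * l)
                 + (s * (l - x) + a * x + a * (l - x) + b * x) / ((s + a) * l)"
proof -
  define A where "A = s * (l - x) + a * x"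
  define B where "B = s * (l - x) + a * x + a * (l - x) + b * x"
  have pos: "0 < a * ((s + a) * l)" using assms by simp
  have nonzero: "a \<noteq> 0" "l \<noteq> 0" "s + a \<noteq> 0" using assms by auto
  \<comment> \<open>the last summand vanishes: this is why the first RDC price is \<open>sqrt (a b)\<close>\<close>
  have "(s + a) * A + a * B = s * ((s + a) * l) + a * (a * x + a * l + s * (l - x)) + x * (a * b - s * s)"
    unfolding A_def B_def by (simp add: algebra_simps)
  also have "\<dots> \<ge> s * ((s + a) * l)" using assms by simp
  finally have "s * ((s + a) * l) / (a * ((s + a) * l)) \<le> ((s + a) * A + a * B) / (a * ((s + a) * l))"
    using pos by (intro divide_right_mono) auto
  also have "((s + a) * A + a * B) / (a * ((s + a) * l)) = A / (a * l) + B / ((s + a) * l)"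
    unfolding add_divide_distrib using nonzero by simp
  finally show ?thesis using nonzero unfolding A_def B_def by simp
qed

lemma step_ratio_sum:
  assumes "0 < a" "a \<le> s" "s \<le> b" "s * s = a * b" "0 \<le> f0" "0 \<le> f1"
    and "0 < L" "2 * (f0 + f1) \<le> a * real L"
    and feasible: "feasible 1 2 (\<lambda>_. L) (\<lambda>_ _. L) m1"
  shows "2 * (s / a / 3) \<le>
        total_cost f0 f1 1 1 (\<lambda>_ _. L) (step_costs a s b) m1
          / OPT f0 f1 1 1 (\<lambda>_. L) (\<lambda>_ _. L) (step_costs a s b)
      + total_cost f0 f1 1 2 (\<lambda>_ _. L) (step_costs a s b) m1
          / OPT f0 f1 1 2 (\<lambda>_. L) (\<lambda>_ _. L) (step_costs a s b)"
    (is "_ \<le> ?X / ?OA + ?Y / ?OB")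
proof -
  define x where "x = real (m1 1 0)"
  define A where "A = s * (real L - x) + a * x"
  define B where "B = s * (real L - x) + a * x + a * (real L - x) + b * x"
  have x: "0 \<le> x" "x \<le> real L"
    using feasibleD(1)[OF feasible, of 1 0] unfolding x_def by auto
  have aL: "0 < a * real L" using assms(1,7) by simp
  have A: "0 \<le> A" unfolding A_def using x assms(1,2) by simp
  have B: "0 \<le> B" unfolding B_def using x assms(1-3) by simp
  note OA = OPT_step_one_period[OF assms(1-3,5-7)]
  note OB = OPT_step_two_periods[OF assms(1-3,5-7)]
  have cost: "A \<le> ?X" "B \<le> ?Y"
    using total_cost_step_ge[OF assms(5,6) order_trans[OF assms(2,3)] feasible, of s]
    unfolding A_def B_def x_def by simp_all
  have balance: "s / a \<le> A / (a * real L) + B / ((s + a) * real L)"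
    unfolding A_def B_def using step_ratio_balance[OF assms(1,2,4) x] assms(7) by simp
  have "2 * (s / a / 3) = 2/3 * (s / a)" by simp
  also have "\<dots> \<le> 2/3 * (A / (a * real L) + B / ((s + a) * real L))" using balance by simp
  also have "\<dots> = A / (3/2 * (a * real L)) + B / (3/2 * ((s + a) * real L))" by simp
  also have "\<dots> \<le> ?X / ?OA + ?Y / ?OB"
  proof (rule add_mono)
    show "A / (3/2 * (a * real L)) \<le> ?X / ?OA"
    proof (rule frac_le)
      show "?OA \<le> 3/2 * (a * real L)" using OA(2) assms(5,8) by argo
    qed (use A aL OA(1) cost(1) in auto)
    show "B / (3/2 * ((s + a) * real L)) \<le> ?Y / ?OB"
    proof (rule frac_le)
      have "a * real L \<le> (s + a) * real L" using assms(1,2) by (simp add: mult_right_mono)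
      then show "?OB \<le> 3/2 * ((s + a) * real L)" using OB(2) assms(5,8) by argo
    qed (use B aL OB(1) cost(2) in auto)
  qed
  finally show ?thesis .
qed

lemma competitive_ratio_ge_sqrt:
  assumes rp: "randomized_policy a b f0 f1 M P" and "0 < a" "a < b" "0 \<le> f0" "0 \<le> f1"
  shows "ereal (sqrt (b / a) / 3) \<le> competitive_ratio a b f0 f1 M P"
proof -
  define s where "s = sqrt (a * b)"
  have s: "a \<le> s" "s \<le> b" "s * s = a * b"
    unfolding s_def using assms(2,3) real_sqrt_le_mono[of "a * a" "a * b"]
      real_sqrt_le_mono[of "a * b" "b * b"] by auto
  have "b / a = (a * b) / (a * a)" using assms(2) by simp
  then have "sqrt (b / a) = sqrt (a * b) / sqrt (a * a)" by (metis real_sqrt_divide)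
  then have sqrt_eq: "sqrt (b / a) = s / a" unfolding s_def using assms(2) by simp
  define L :: nat where "L = nat \<lceil>2 * (f0 + f1) / a\<rceil> + 1"
  have "2 * (f0 + f1) / a \<le> real L" unfolding L_def by linarith
  then have L: "0 < L" "2 * (f0 + f1) \<le> a * real L"
    using assms(2) by (auto simp: L_def field_simps)
  have v: "valid_costs a b 1 T (step_costs a s b)" for T using s by (intro valid_step_costs)
  note OPT_ge = OPT_step_one_period(1)[OF assms(2) s(1,2) assms(4,5) L(1)]
    OPT_step_two_periods(1)[OF assms(2) s(1,2) assms(4,5) L(1)]
  have "0 < a * real L" using assms(2) L(1) by simp
  then have OPT_pos: "0 < OPT f0 f1 1 1 (\<lambda>_. L) (\<lambda>_ _. L) (step_costs a s b)"
      "0 < OPT f0 f1 1 2 (\<lambda>_. L) (\<lambda>_ _. L) (step_costs a s b)"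
    using OPT_ge by linarith+
  show ?thesis
    unfolding sqrt_eq
    by (rule competitive_ratio_ge_pair_average[OF rp assms(4,5) less_imp_le[OF assms(2)] v v OPT_pos],
      rule step_ratio_sum[OF assms(2) s assms(4,5) L], erule feasible_decisions[OF rp _ v])
qed

section \<open>The fixed-cost bound\<close>

definition burst_orders :: "nat \<Rightarrow> nat \<Rightarrow> nat" where
  "burst_orders t i = (if t = 1 \<or> t = i + 2 then 1 else 0)"

lemma sum_burst_period:
  fixes g :: "nat \<Rightarrow> 'a::comm_monoid_add"
  assumes "t \<in> {2..n+1}"
  shows "(\<Sum>i<n. if t = i + 2 then g i else 0) = g (t - 2)"
proof -
  have "(\<Sum>i<n. if t = i + 2 then g i else 0) = (\<Sum>i<n. if i = t - 2 then g i else 0)"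
    using assms by (intro sum.cong) auto
  also have "\<dots> = g (t - 2)" using assms by (simp add: sum.delta less_diff_conv2)
  finally show ?thesis .
qed

lemma OPT_burst_ge:
  assumes "0 \<le> f0" "0 \<le> f1" "0 \<le> a" "1 \<le> T"
  shows "real n * a \<le> OPT f0 f1 n T (\<lambda>_. 1) burst_orders (\<lambda>_ _ _. a)"
proof -
  have "real n * a = a * (\<Sum>i<n. real (burst_orders 1 i))" by (simp add: burst_orders_def)
  also have "\<dots> \<le> (\<Sum>t\<in>{1..T}. a * (\<Sum>i<n. real (burst_orders t i)))"
    by (rule member_le_sum) (use assms(3,4) in \<open>auto intro!: mult_nonneg_nonneg sum_nonneg\<close>)
  also have "\<dots> \<le> OPT f0 f1 n T (\<lambda>_. 1) burst_orders (\<lambda>_ _ _. a)"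
    by (rule OPT_ge_demand[OF assms(1,2) valid_constant_costs[OF order_refl]])
  finally show ?thesis .
qed

lemma OPT_burst_one_period_le:
  assumes "0 \<le> f0" "0 \<le> f1" "0 \<le> a" "0 < n"
  shows "OPT f0 f1 n 1 (\<lambda>_. 1) burst_orders (\<lambda>_ _ _. a) \<le> f1 + real n * a"
proof -
  have "feasible n 1 (\<lambda>_. 1) burst_orders (\<lambda>_ _. 1)"
    unfolding feasible_def burst_orders_def by auto
  from OPT_le_total_cost[OF assms(1-3) valid_constant_costs[OF order_refl] this] assms(4)
  show ?thesis by (simp add: total_cost_def burst_orders_def)
qed

lemma OPT_burst_all_periods_le:
  assumes "0 \<le> f0" "0 \<le> f1" "0 \<le> a" "0 < n"
  shows "OPT f0 f1 n (n + 1) (\<lambda>_. 1) burst_orders (\<lambda>_ _ _. a)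
           \<le> f0 + real n * f1 + 2 * real n * a"
proof -
  define m1 :: "nat \<Rightarrow> nat \<Rightarrow> nat" where "m1 t i = (if t = i + 2 then 1 else 0)" for t i
  have "feasible n (n + 1) (\<lambda>_. 1) burst_orders m1"
    unfolding feasible_def burst_orders_def m1_def by (auto simp: sum.delta)
  note OPT_le = OPT_le_total_cost[OF assms(1-3) valid_constant_costs[OF order_refl] this]
  have first: "period_cost f0 f1 n burst_orders (\<lambda>_ _ _. a) m1 1 = f0 + real n * a"
    using assms(4) by (simp add: period_cost_def shipping_cost_def burst_orders_def m1_def)
  have later: "period_cost f0 f1 n burst_orders (\<lambda>_ _ _. a) m1 t = f1 + a"
    if "t \<in> {2..n+1}" for t
  proof -
    have "(\<Sum>i<n. if t = i + 2 then 1 else 0) = (1::nat)"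
      "(\<Sum>i<n. a * real (if t = i + 2 then 1 else 0)) = a"
      using sum_burst_period[OF that, of "\<lambda>_. 1::nat"] sum_burst_period[OF that, of "\<lambda>_. a"]
      by (simp_all add: if_distrib cong: if_cong)
    then show ?thesis
      using that by (simp add: period_cost_def shipping_cost_def burst_orders_def m1_def)
  qed
  have "{1..n + 1} = insert 1 {2..n + 1}" by auto
  then have "total_cost f0 f1 n (n + 1) burst_orders (\<lambda>_ _ _. a) m1 = f0 + real n * a + real n * (f1 + a)"
    unfolding total_cost_eq_sum_period_cost using first later by simp
  then show ?thesis using OPT_le by (simp add: algebra_simps)
qed

lemma feasible_exhausted_inventory:
  assumes "feasible N T I0 S m1" "1 \<le> \<tau>" "\<tau> < t" "t \<le> T" "i < N" "m1 \<tau> i = I0 i"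
  shows "m1 t i = 0"
proof -
  have "m1 \<tau> i + m1 t i = (\<Sum>u\<in>{\<tau>, t}. m1 u i)" using assms(3) by simp
  also have "\<dots> \<le> (\<Sum>u\<in>{1..t}. m1 u i)" by (rule sum_mono2) (use assms(2,3) in auto)
  also have "\<dots> \<le> I0 i" using feasibleD(2)[OF assms(1) _ assms(5)] assms(2-4) by simp
  finally show ?thesis using assms(6) by simp
qed

lemma total_cost_burst_rdc_first:
  assumes "0 \<le> f1" "feasible n (n + 1) (\<lambda>_. 1) burst_orders m1" "i < n" "m1 1 i = 0"
  shows "f0 + real n * a \<le> total_cost f0 f1 n 1 burst_orders (\<lambda>_ _ _. a) m1"
proof -
  have "m1 1 i < burst_orders 1 i" using assms(4) by (simp add: burst_orders_def)
  from period_cost_ge_rdc_fixed_cost[OF assms(1) valid_constant_costs[OF order_refl] assms(2) _ assms(3) this]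
  have "f0 + a * (\<Sum>j<n. real (burst_orders 1 j)) \<le> period_cost f0 f1 n burst_orders (\<lambda>_ _ _. a) m1 1"
    by simp
  then show ?thesis by (simp add: total_cost_eq_sum_period_cost burst_orders_def mult.commute)
qed

lemma total_cost_burst_fdc_first:
  assumes "0 \<le> f0" "0 \<le> f1" "0 \<le> a" "feasible n (n + 1) (\<lambda>_. 1) burst_orders m1"
    and fdc_first: "\<forall>i<n. m1 1 i = 1"
  shows "real n * f0 \<le> total_cost f0 f1 n (n + 1) burst_orders (\<lambda>_ _ _. a) m1"
proof -
  note valid = valid_constant_costs[OF order_refl, of a n "n + 1"]
  have period_nonneg: "0 \<le> period_cost f0 f1 n burst_orders (\<lambda>_ _ _. a) m1 t"
    if "t \<in> {1..n+1}" for t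
  proof -
    have "0 \<le> a * (\<Sum>i<n. real (burst_orders t i))" using assms(3) by (simp add: sum_nonneg)
    also have "\<dots> \<le> shipping_cost n burst_orders (\<lambda>_ _ _. a) m1 t"
      by (rule shipping_cost_ge_demand[OF valid assms(4) that])
    also have "\<dots> \<le> period_cost f0 f1 n burst_orders (\<lambda>_ _ _. a) m1 t"
      by (rule period_cost_ge_shipping_cost[OF assms(1,2)])
    finally show ?thesis .
  qed
  have "f0 \<le> period_cost f0 f1 n burst_orders (\<lambda>_ _ _. a) m1 t" if t: "t \<in> {2..n+1}" for t
  proof -
    define i where "i = t - 2"
    have i: "i < n" "t = i + 2" using t unfolding i_def by auto
    have "m1 t i = 0"
      using feasible_exhausted_inventory[OF assms(4), of 1 t i] fdc_first i t by auto
    then have "m1 t i < burst_orders t i" using i by (simp add: burst_orders_def)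
    from period_cost_ge_rdc_fixed_cost[OF assms(2) valid assms(4) _ i(1) this] t
    have "f0 + a * (\<Sum>j<n. real (burst_orders t j)) \<le> period_cost f0 f1 n burst_orders (\<lambda>_ _ _. a) m1 t"
      by simp
    moreover have "0 \<le> a * (\<Sum>j<n. real (burst_orders t j))" using assms(3) by (simp add: sum_nonneg)
    ultimately show ?thesis by linarith
  qed
  then have "real n * f0 \<le> (\<Sum>t\<in>{2..n+1}. period_cost f0 f1 n burst_orders (\<lambda>_ _ _. a) m1 t)"
    using sum_mono[of "{2..n+1}" "\<lambda>_. f0"] by simp
  also have "\<dots> \<le> (\<Sum>t\<in>{1..n+1}. period_cost f0 f1 n burst_orders (\<lambda>_ _ _. a) m1 t)"
    by (rule sum_mono2) (auto intro: period_nonneg)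
  finally show ?thesis unfolding total_cost_eq_sum_period_cost .
qed

lemma min_fixed_cost_ratio_le:
  fixes n a f0 f1 :: real
  assumes "2 \<le> n" "0 < a" "0 \<le> f0" "0 \<le> f1"
  shows "min n (f0 / (f1 + n * a)) / 2 \<le> n * f0 / (f0 + n * f1 + 2 * n * a)"
proof -
  define D where "D = f1 + n * a"
  have D: "0 < D" unfolding D_def using assms by (simp add: add_nonneg_pos)
  have "2 * (n * a) \<le> n * (n * a)" using assms by (intro mult_right_mono) auto
  then have denom: "0 < f0 + n * f1 + 2 * n * a" "f0 + n * f1 + 2 * n * a \<le> f0 + n * D"
    using assms by (auto simp: D_def algebra_simps add_nonneg_pos)
  have pos: "0 < f0 + n * D" using assms D by (simp add: add_nonneg_pos)
  have "min n (f0 / D) / 2 \<le> n * f0 / (f0 + n * D)"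
  proof (cases "n * D \<le> f0")
    case True
    then have "n / 2 * (f0 + n * D) \<le> n / 2 * (2 * f0)"
      using assms(1) by (intro mult_left_mono) auto
    then have "n / 2 \<le> n * f0 / (f0 + n * D)" using pos by (simp add: pos_le_divide_eq)
    moreover have "min n (f0 / D) / 2 \<le> n / 2" by (intro divide_right_mono) auto
    ultimately show ?thesis by (meson order_trans)
  next
    case False
    then have "f0 / D / 2 * (f0 + n * D) \<le> f0 / D / 2 * (2 * (n * D))"
      using assms(3) D by (intro mult_left_mono) (auto simp: mult.commute)
    also have "\<dots> = n * f0" using D by simp
    finally have "f0 / D / 2 \<le> n * f0 / (f0 + n * D)" using pos by (simp add: pos_le_divide_eq)
    moreover have "min n (f0 / D) / 2 \<le> f0 / D / 2" by (intro divide_right_mono) auto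
    ultimately show ?thesis by (meson order_trans)
  qed
  also have "\<dots> \<le> n * f0 / (f0 + n * f1 + 2 * n * a)"
    using denom assms by (intro divide_left_mono) auto
  finally show ?thesis unfolding D_def .
qed

lemma burst_ratio_sum:
  assumes "2 \<le> n" "0 < a" "0 \<le> f0" "0 \<le> f1"
    and feasible: "feasible n (n + 1) (\<lambda>_. 1) burst_orders m1"
  shows "2 * (min (real n) (f0 / (f1 + real n * a)) / 4) \<le>
        total_cost f0 f1 n 1 burst_orders (\<lambda>_ _ _. a) m1
          / OPT f0 f1 n 1 (\<lambda>_. 1) burst_orders (\<lambda>_ _ _. a)
      + total_cost f0 f1 n (n + 1) burst_orders (\<lambda>_ _ _. a) m1
          / OPT f0 f1 n (n + 1) (\<lambda>_. 1) burst_orders (\<lambda>_ _ _. a)"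
    (is "?r \<le> ?X / ?OA + ?Y / ?OB")
proof -
  have a: "0 \<le> a" "0 < real n * a" using assms(1,2) by auto
  have OA: "0 < ?OA" "?OA \<le> f1 + real n * a"
    using OPT_burst_ge[OF assms(3,4) a(1), of 1 n] OPT_burst_one_period_le[OF assms(3,4) a(1)] a(2) assms(1)
    by auto
  have OB: "0 < ?OB" "?OB \<le> f0 + real n * f1 + 2 * real n * a"
    using OPT_burst_ge[OF assms(3,4) a(1), of "n + 1" n] OPT_burst_all_periods_le[OF assms(3,4) a(1)] a(2) assms(1)
    by auto
  note valid = valid_constant_costs[OF order_refl, of a]
  have X: "0 \<le> ?X" using total_cost_nonneg[OF assms(3,4) a(1) valid feasible_prefix[OF feasible]] by simp
  have Y: "0 \<le> ?Y" using total_cost_nonneg[OF assms(3,4) a(1) valid feasible] .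
  have ratios_nonneg: "0 \<le> ?X / ?OA" "0 \<le> ?Y / ?OB" using X Y OA(1) OB(1) by auto
  have first_period: "m1 1 i \<le> 1" if "i < n" for i
    using feasibleD(1)[OF feasible _ that, of 1] by (simp add: burst_orders_def)
  consider (rdc) i where "i < n" "m1 1 i = 0" | (fdc) "\<forall>i<n. m1 1 i = 1"
    using first_period by (metis le_neq_implies_less less_one)
  then show ?thesis
  proof cases
    case rdc
    define q where "q = f0 / (f1 + real n * a)"
    have "0 \<le> q" unfolding q_def using assms(3,4) a(2) by simp
    then have "?r \<le> q" unfolding q_def[symmetric] using min.cobounded2[of "real n" q] by linarith
    also have "q \<le> ?X / ?OA" unfolding q_def
      using total_cost_burst_rdc_first[OF assms(4) feasible rdc, of f0 a] OA assms(3) a(2)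
      by (intro frac_le) auto
    finally show ?thesis using ratios_nonneg by linarith
  next
    case fdc
    have "?r \<le> real n * f0 / (f0 + real n * f1 + 2 * real n * a)"
      using min_fixed_cost_ratio_le[of "real n" a f0 f1] assms(1-4) by (simp add: mult.commute)
    also have "\<dots> \<le> ?Y / ?OB"
      using total_cost_burst_fdc_first[OF assms(3,4) a(1) feasible fdc] Y OB assms(3)
      by (intro frac_le) auto
    finally show ?thesis using ratios_nonneg by linarith
  qed
qed

lemma competitive_ratio_ge_fixed_cost:
  assumes rp: "randomized_policy a b f0 f1 M P" and "0 < a" "a \<le> b" "0 \<le> f0" "0 \<le> f1" "2 \<le> n"
  shows "ereal (min (real n) (f0 / (f1 + real n * a)) / 4) \<le> competitive_ratio a b f0 f1 M P"
proof -
  have a: "0 \<le> a" "0 < real n * a" using assms(2,6) by auto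
  have v: "valid_costs a b n T (\<lambda>_ _ _. a)" for T by (rule valid_constant_costs[OF assms(3)])
  have "0 < OPT f0 f1 n T (\<lambda>_. 1) burst_orders (\<lambda>_ _ _. a)" if "1 \<le> T" for T
    using OPT_burst_ge[OF assms(4,5) a(1) that, of n] a(2) by linarith
  then have OPT_pos: "0 < OPT f0 f1 n 1 (\<lambda>_. 1) burst_orders (\<lambda>_ _ _. a)"
    "0 < OPT f0 f1 n (n + 1) (\<lambda>_. 1) burst_orders (\<lambda>_ _ _. a)" by auto
  show ?thesis
    by (rule competitive_ratio_ge_pair_average[OF rp assms(4,5) a(1) v v OPT_pos],
      rule burst_ratio_sum[OF assms(6,2,4,5)], erule feasible_decisions[OF rp _ v])
qed

theorem theorem7:
  fixes a b f0 f1 :: real and M :: "'w measure" and P :: "'w \<Rightarrow> policy"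
  assumes "0 < a" and "a < b" and "0 \<le> f0" and "0 \<le> f1"
    and "randomized_policy a b f0 f1 M P"
  shows "competitive_ratio a b f0 f1 M P \<ge>
     max 1 (max (ereal (sqrt (b / a) / 3))
               (SUP n \<in> {2::nat..}. ereal (min (real n) (f0 / (f1 + real n * a)) / 4)))"
proof -
  have "1 \<le> competitive_ratio a b f0 f1 M P"
    by (rule competitive_ratio_ge_one[OF assms(5,1) less_imp_le[OF assms(2)] assms(3,4)])
  moreover have "ereal (sqrt (b / a) / 3) \<le> competitive_ratio a b f0 f1 M P"
    by (rule competitive_ratio_ge_sqrt[OF assms(5,1-4)])
  moreover have "(SUP n \<in> {2::nat..}. ereal (min (real n) (f0 / (f1 + real n * a)) / 4))
      \<le> competitive_ratio a b f0 f1 M P"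
    using competitive_ratio_ge_fixed_cost[OF assms(5,1) less_imp_le[OF assms(2)] assms(3,4)]
    by (auto intro: SUP_least)
  ultimately show ?thesis by simp
qed

end
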